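(* Algorithm 1 (as described in the context) is a decision procedure for DQBF: on every input DQBF $\Phi$ it terminates, and it returns TRUE if $\Phi$ is true and FALSE if $\Phi$ is false, for every admissible choice made during the run.
   Context: For a set $V$ of variables, $[V]$ is the set of assignments $V\to\{\textsc{true},\textsc{false}\}$; assignments are identified with terms of the literals they make true, $\neg\sigma$ is the clause of the negations of these literals, and $\sigma|_W$ denotes restriction. A DQBF is $\Phi=\forall u_1\ldots\forall u_n\exists e_1(D_1)\ldots\exists e_m(D_m).\varphi$ with pairwise distinct variables, $U=\{u_i\}$, $E=\{e_j\}$, dependency sets $D(e_j)=D_j\subseteq U$, $\varphi$ a CNF over $U\cup E$; a model is a family $(f_e)_{e\in E}$, $f_e:[D(e)]\to\{\textsc{true},\textsc{false}\}$, such that for all $\sigma\in[U]$ the assignment $\sigma$ together with $e\mapsto f_e(\sigma|_{D(e)})$ satisfies $\varphi$; $\Phi$ is true iff it has a model, false otherwise. A definition of a variable $x$ by a set $X$ in a formula $\chi$ is a formula $\psi$ with $\mathit{var}(\psi)\subseteq X$ such that every satisfying assignment $\lambda$ of $\chi$ has $\lambda(x)=\psi[\lambda]$. Arbiter variables $e^\sigma$ ($e\in E$, $\sigma\in[D(e)]$) are fresh variables. Algorithm 1. Phase 1: set $A=\emptyset$, $\varphi_A=\emptyset$, $\psi_{\mathit{Def}}=$ empty conjunction. For $i=1,\dots,m$: while $e_i$ has no definition by $A\cup D_i$ in $\varphi\wedge\varphi_A$, choose $\xi\in[D_i\cup A]$ such that both $\varphi\wedge\varphi_A\wedge\xi\wedge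 e_i$ and $\varphi\wedge\varphi_A\wedge\xi\wedge\neg e_i$ are satisfiable, let $\sigma=\xi|_{D_i}$, add $e_i^\sigma$ to $A$ and the clauses $(e_i^\sigma\vee\neg\sigma\vee\neg e_i)$, $(\neg e_i^\sigma\vee\neg\sigma\vee e_i)$ to $\varphi_A$. Then choose a definition $\psi^i$ of $e_i$ by $A\cup D_i$ in $\varphi\wedge\varphi_A$ and conjoin $(e_i\leftrightarrow\psi^i)$ to $\psi_{\mathit{Def}}$. Phase 2: let $\tau\in[A]$ set all arbiter variables true, $\mathcal{C}=\emptyset$. Repeat: if $\neg\varphi\wedge\psi_{\mathit{Def}}\wedge\tau$ is unsatisfiable, return TRUE; otherwise choose a satisfying assignment $\sigma$ of it, choose a subset $\rho$ of the literals of $\tau\wedge\sigma|_U$ with $\varphi\wedge\varphi_A\wedge\rho$ unsatisfiable, add the clause $\neg(\rho|_A)$ to $\mathcal{C}$; if $\mathcal{C}$ is satisfiable, let $\tau\in[A]$ satisfy $\mathcal{C}$ and repeat, else return FALSE. *)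

theory Defs
  imports Main
begin

type_synonym 'a lit = "'a \<times> bool"      \<comment> \<open>(x, True) is x, (x, False) is \<not>x\<close>
type_synonym 'a clause = "'a lit set"
type_synonym 'a cnf = "'a clause set"
type_synonym 'a trm = "'a lit set"        \<comment> \<open>term = conjunction of literals\<close>

definition lit_sat :: "('a \<Rightarrow> bool) \<Rightarrow> 'a lit \<Rightarrow> bool" where
  "lit_sat \<alpha> l = (\<alpha> (fst l) = snd l)"

definition clause_sat :: "('a \<Rightarrow> bool) \<Rightarrow> 'a clause \<Rightarrow> bool" where
  "clause_sat \<alpha> C = (\<exists>l\<in>C. lit_sat \<alpha> l)"

definition cnf_sat :: "('a \<Rightarrow> bool) \<Rightarrow> 'a cnf \<Rightarrow> bool" where
  "cnf_sat \<alpha> F = (\<forall>C\<in>F. clause_sat \<alpha> C)"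

definition term_sat :: "('a \<Rightarrow> bool) \<Rightarrow> 'a trm \<Rightarrow> bool" where
  "term_sat \<alpha> T = (\<forall>l\<in>T. lit_sat \<alpha> l)"

definition satisfiable :: "'a cnf \<Rightarrow> bool" where
  "satisfiable F = (\<exists>\<alpha>. cnf_sat \<alpha> F)"

definition units :: "'a trm \<Rightarrow> 'a cnf" where
  "units T = {{l} | l. l \<in> T}"

text \<open>[V]: the assignments V \<rightarrow> {true,false}, identified with the terms of the literals
  they make true.\<close>
definition asg :: "'a set \<Rightarrow> 'a trm set" where
  "asg V = {T. \<exists>g. T = {(v, g v) | v. v \<in> V}}"

definition restr :: "'a trm \<Rightarrow> 'a set \<Rightarrow> 'a trm" where
  "restr \<sigma> W = {l \<in> \<sigma>. fst l \<in> W}"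

definition neg_trm :: "'a trm \<Rightarrow> 'a clause" where
  "neg_trm \<sigma> = {(x, \<not> b) | x b. (x, b) \<in> \<sigma>}"

datatype 'a form = FVar 'a | FTrue | FFalse | FNot "'a form"
  | FAnd "'a form" "'a form" | FOr "'a form" "'a form"

fun feval :: "('a \<Rightarrow> bool) \<Rightarrow> 'a form \<Rightarrow> bool" where
  "feval \<alpha> (FVar x) = \<alpha> x"
| "feval \<alpha> FTrue = True"
| "feval \<alpha> FFalse = False"
| "feval \<alpha> (FNot f) = (\<not> feval \<alpha> f)"
| "feval \<alpha> (FAnd f g) = (feval \<alpha> f \<and> feval \<alpha> g)"
| "feval \<alpha> (FOr f g) = (feval \<alpha> f \<or> feval \<alpha> g)"

fun fvars :: "'a form \<Rightarrow> 'a set" where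
  "fvars (FVar x) = {x}"
| "fvars FTrue = {}"
| "fvars FFalse = {}"
| "fvars (FNot f) = fvars f"
| "fvars (FAnd f g) = fvars f \<union> fvars g"
| "fvars (FOr f g) = fvars f \<union> fvars g"

definition is_definition :: "'a cnf \<Rightarrow> 'a set \<Rightarrow> 'a \<Rightarrow> 'a form \<Rightarrow> bool" where
  "is_definition \<chi> X x \<psi> =
     (fvars \<psi> \<subseteq> X \<and> (\<forall>\<alpha>. cnf_sat \<alpha> \<chi> \<longrightarrow> \<alpha> x = feval \<alpha> \<psi>))"

definition has_definition :: "'a cnf \<Rightarrow> 'a set \<Rightarrow> 'a \<Rightarrow> bool" where
  "has_definition \<chi> X x = (\<exists>\<psi>. is_definition \<chi> X x \<psi>)"

text \<open>A DQBF \<forall>u_1..u_n \<exists>e_1(D_1)..\<exists>e_m(D_m). \<phi> is given by the list us of universal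
  variables, the list es of existential variables, the dependency map D and the CNF \<phi>.\<close>
definition dqbf_wf :: "'v list \<Rightarrow> 'v list \<Rightarrow> ('v \<Rightarrow> 'v set) \<Rightarrow> 'v cnf \<Rightarrow> bool" where
  "dqbf_wf us es D \<phi> =
     (distinct (us @ es) \<and> (\<forall>e\<in>set es. D e \<subseteq> set us) \<and> finite \<phi> \<and>
      (\<forall>C\<in>\<phi>. finite C \<and> fst ` C \<subseteq> set us \<union> set es))"

text \<open>Truth: existence of a model (f_e)_e with f_e : [D(e)] \<rightarrow> bool (only its values on
  [D(e)] matter).\<close>
definition dqbf_true :: "'v list \<Rightarrow> 'v list \<Rightarrow> ('v \<Rightarrow> 'v set) \<Rightarrow> 'v cnf \<Rightarrow> bool" where
  "dqbf_true us es D \<phi> =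
     (\<exists>f :: 'v \<Rightarrow> 'v trm \<Rightarrow> bool. \<forall>\<sigma> \<in> asg (set us).
        cnf_sat (\<lambda>x. if x \<in> set us then (x, True) \<in> \<sigma> else f x (restr \<sigma> (D x))) \<phi>)"

text \<open>Variables of the algorithm: original variables and (fresh) arbiter variables e^\<sigma>,
  \<sigma> \<in> [D(e)].\<close>
datatype 'v avar = Orig 'v | Arb 'v "'v trm"

definition lift_cnf :: "'v cnf \<Rightarrow> 'v avar cnf" where
  "lift_cnf \<phi> = (\<lambda>C. (\<lambda>(x, b). (Orig x, b)) ` C) ` \<phi>"

text \<open>\<psi>_Def is represented by the list of pairs (e_i, \<psi>^i), standing for the conjunction
  of the (e_i \<leftrightarrow> \<psi>^i).\<close>
definition defs_sat :: "('v avar \<Rightarrow> bool) \<Rightarrow> ('v \<times> 'v avar form) list \<Rightarrow> bool" where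
  "defs_sat \<alpha> ds = (\<forall>(e, \<psi>) \<in> set ds. \<alpha> (Orig e) = feval \<alpha> \<psi>)"

text \<open>States: Phase1 i A \<phi>_A \<psi>_Def (currently treating e_{i+1}, 0-based index i);
  Phase2 A \<phi>_A \<psi>_Def \<C> \<tau>; Result b (returned TRUE/FALSE).\<close>
datatype 'v state =
    Phase1 nat "'v avar set" "'v avar cnf" "('v \<times> 'v avar form) list"
  | Phase2 "'v avar set" "'v avar cnf" "('v \<times> 'v avar form) list" "'v avar cnf" "'v avar trm"
  | Result bool

definition init_state :: "'v state" where
  "init_state = Phase1 0 {} {} []"

inductive alg_step :: "'v list \<Rightarrow> 'v list \<Rightarrow> ('v \<Rightarrow> 'v set) \<Rightarrow> 'v cnf
                        \<Rightarrow> 'v state \<Rightarrow> 'v state \<Rightarrow> bool"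
  for us es D \<phi> where
  \<comment> \<open>Phase 1, loop body: e_i has no definition, add an arbiter e_i^\<sigma>\<close>
  add_arbiter:
  "\<lbrakk> i < length es; e = es ! i;
     \<not> has_definition (lift_cnf \<phi> \<union> \<phi>A) (Orig ` D e \<union> A) (Orig e);
     \<xi> \<in> asg (Orig ` D e \<union> A);
     satisfiable (lift_cnf \<phi> \<union> \<phi>A \<union> units \<xi> \<union> {{(Orig e, True)}});
     satisfiable (lift_cnf \<phi> \<union> \<phi>A \<union> units \<xi> \<union> {{(Orig e, False)}});
     \<sigma> = {(v, b). (Orig v, b) \<in> \<xi> \<and> v \<in> D e};
     \<sigma>' = restr \<xi> (Orig ` D e) \<rbrakk>
   \<Longrightarrow> alg_step us es D \<phi> (Phase1 i A \<phi>A ds)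
        (Phase1 i (insert (Arb e \<sigma>) A)
           (\<phi>A \<union> {insert (Arb e \<sigma>, True) (insert (Orig e, False) (neg_trm \<sigma>')),
                  insert (Arb e \<sigma>, False) (insert (Orig e, True) (neg_trm \<sigma>'))})
           ds)"
  \<comment> \<open>Phase 1, after the loop: choose a definition \<psi>^i and conjoin (e_i \<leftrightarrow> \<psi>^i)\<close>
| choose_def:
  "\<lbrakk> i < length es; e = es ! i;
     is_definition (lift_cnf \<phi> \<union> \<phi>A) (Orig ` D e \<union> A) (Orig e) \<psi> \<rbrakk>
   \<Longrightarrow> alg_step us es D \<phi> (Phase1 i A \<phi>A ds) (Phase1 (Suc i) A \<phi>A (ds @ [(e, \<psi>)]))"
| start_phase2:
  "i = length es
   \<Longrightarrow> alg_step us es D \<phi> (Phase1 i A \<phi>A ds)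
        (Phase2 A \<phi>A ds {} {(a, True) | a. a \<in> A})"
| ret_true:
  "\<not> (\<exists>\<alpha>. \<not> cnf_sat \<alpha> (lift_cnf \<phi>) \<and> defs_sat \<alpha> ds \<and> term_sat \<alpha> \<tau>)
   \<Longrightarrow> alg_step us es D \<phi> (Phase2 A \<phi>A ds CC \<tau>) (Result True)"
  \<comment> \<open>Phase 2: counterexample \<sigma>, core \<rho>, new clause; \<C> unsatisfiable: return FALSE\<close>
| ret_false:
  "\<lbrakk> \<not> cnf_sat \<alpha> (lift_cnf \<phi>); defs_sat \<alpha> ds; term_sat \<alpha> \<tau>;
     \<rho> \<subseteq> \<tau> \<union> {(Orig u, \<alpha> (Orig u)) | u. u \<in> set us};
     \<not> satisfiable (lift_cnf \<phi> \<union> \<phi>A \<union> units \<rho>);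
     \<not> satisfiable (insert (neg_trm (restr \<rho> A)) CC) \<rbrakk>
   \<Longrightarrow> alg_step us es D \<phi> (Phase2 A \<phi>A ds CC \<tau>) (Result False)"
  \<comment> \<open>Phase 2: counterexample \<sigma>, core \<rho>, new clause; \<C> satisfiable by \<tau>' \<in> [A]: repeat\<close>
| refine:
  "\<lbrakk> \<not> cnf_sat \<alpha> (lift_cnf \<phi>); defs_sat \<alpha> ds; term_sat \<alpha> \<tau>;
     \<rho> \<subseteq> \<tau> \<union> {(Orig u, \<alpha> (Orig u)) | u. u \<in> set us};
     \<not> satisfiable (lift_cnf \<phi> \<union> \<phi>A \<union> units \<rho>);
     \<tau>' \<in> asg A;
     \<forall>\<mu>. term_sat \<mu> \<tau>' \<longrightarrow> cnf_sat \<mu> (insert (neg_trm (restr \<rho> A)) CC) \<rbrakk>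
   \<Longrightarrow> alg_step us es D \<phi> (Phase2 A \<phi>A ds CC \<tau>)
        (Phase2 A \<phi>A ds (insert (neg_trm (restr \<rho> A)) CC) \<tau>')"

end

theory Submission
  imports Defs
begin

(* Phase 1 terminates because every arbiter e^\<sigma> it adds is new: an arbiter already in A,
   together with its two clauses, would force the value of e under \<xi>, contradicting the choice
   of \<xi>. Since there are finitely many arbiters, afterwards every e_i is defined in terms of
   D_i and the arbiters, so an assignment \<tau> of the arbiters induces candidate Skolem functions,
   and these form a model as soon as \<not>\<phi> \<and> \<psi>_Def \<and> \<tau> is unsatisfiable.
   A model (f_e) yields the arbiter values e^\<sigma> := f_e(\<sigma>), which satisfy \<phi>_A together with
   \<phi>; hence each learned clause \<not>(\<rho>|_A) holds under these values, and an unsatisfiable \<C>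
   refutes the existence of a model. Each learned clause is falsified by the current \<tau>, which
   satisfies \<C>, so it is new; as there are finitely many clauses over A, Phase 2 terminates. *)

lemma cnf_sat_Un [simp]: "cnf_sat \<alpha> (F \<union> G) \<longleftrightarrow> cnf_sat \<alpha> F \<and> cnf_sat \<alpha> G"
  by (auto simp: cnf_sat_def)

lemma cnf_sat_insert [simp]: "cnf_sat \<alpha> (insert C F) \<longleftrightarrow> clause_sat \<alpha> C \<and> cnf_sat \<alpha> F"
  by (auto simp: cnf_sat_def)

lemma cnf_sat_empty [simp]: "cnf_sat \<alpha> {}"
  by (simp add: cnf_sat_def)

lemma cnf_sat_units [simp]: "cnf_sat \<alpha> (units T) \<longleftrightarrow> term_sat \<alpha> T"
  by (auto simp: cnf_sat_def units_def term_sat_def clause_sat_def)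

lemma clause_sat_empty [simp]: "\<not> clause_sat \<alpha> {}"
  by (simp add: clause_sat_def)

lemma clause_sat_insert [simp]: "clause_sat \<alpha> (insert l C) \<longleftrightarrow> lit_sat \<alpha> l \<or> clause_sat \<alpha> C"
  by (simp add: clause_sat_def)

lemma clause_sat_neg_trm [simp]: "clause_sat \<alpha> (neg_trm T) \<longleftrightarrow> \<not> term_sat \<alpha> T"
proof -
  have "neg_trm T = (\<lambda>l. (fst l, \<not> snd l)) ` T"
    by (force simp: neg_trm_def)
  then show ?thesis
    by (auto simp: clause_sat_def term_sat_def lit_sat_def)
qed

lemma cnf_sat_UN [simp]: "cnf_sat \<alpha> (\<Union>(F ` A)) \<longleftrightarrow> (\<forall>a\<in>A. cnf_sat \<alpha> (F a))"
  by (auto simp: cnf_sat_def)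

lemma cnf_sat_subset: "cnf_sat \<alpha> F \<Longrightarrow> G \<subseteq> F \<Longrightarrow> cnf_sat \<alpha> G"
  by (auto simp: cnf_sat_def)

lemma cnf_sat_cong:
  "(\<And>C l. C \<in> F \<Longrightarrow> l \<in> C \<Longrightarrow> \<alpha> (fst l) = \<beta> (fst l)) \<Longrightarrow> cnf_sat \<alpha> F \<longleftrightarrow> cnf_sat \<beta> F"
  unfolding cnf_sat_def clause_sat_def lit_sat_def by (intro ball_cong bex_cong refl) auto

lemma cnf_sat_lift_cnf: "cnf_sat \<alpha> (lift_cnf F) \<longleftrightarrow> cnf_sat (\<lambda>x. \<alpha> (Orig x)) F"
proof -
  have "clause_sat \<alpha> ((\<lambda>(x, b). (Orig x, b)) ` C) \<longleftrightarrow> clause_sat (\<lambda>x. \<alpha> (Orig x)) C" for C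
    by (force simp: clause_sat_def lit_sat_def)
  then show ?thesis
    by (simp add: lift_cnf_def cnf_sat_def)
qed

lemma feval_cong: "(\<And>x. x \<in> fvars \<psi> \<Longrightarrow> \<alpha> x = \<beta> x) \<Longrightarrow> feval \<alpha> \<psi> = feval \<beta> \<psi>"
  by (induction \<psi>) auto

lemma is_definition_mono:
  "is_definition \<chi> X x \<psi> \<Longrightarrow> \<chi> \<subseteq> \<chi>' \<Longrightarrow> X \<subseteq> X' \<Longrightarrow> is_definition \<chi>' X' x \<psi>"
  unfolding is_definition_def cnf_sat_def by blast

abbreviation asg_of :: "('a \<Rightarrow> bool) \<Rightarrow> 'a set \<Rightarrow> 'a trm" where
  "asg_of g V \<equiv> {(v, g v) | v. v \<in> V}"

lemma asg_of_in_asg: "asg_of g V \<in> asg V"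
  by (auto simp: asg_def)

lemma asgE:
  assumes "T \<in> asg V"
  obtains g where "T = asg_of g V"
  using assms by (auto simp: asg_def)

lemma ball_asg_iff: "(\<forall>T\<in>asg V. P T) \<longleftrightarrow> (\<forall>g. P (asg_of g V))"
  by (auto simp: asg_def)

lemma term_sat_asg_of: "term_sat \<alpha> (asg_of g V) \<longleftrightarrow> (\<forall>v\<in>V. \<alpha> v = g v)"
  by (auto simp: term_sat_def lit_sat_def)

lemma asg_of_cong: "(\<And>v. v \<in> V \<Longrightarrow> u v = g v) \<Longrightarrow> asg_of u V = asg_of g V"
  by auto

lemma restr_asg_of: "W \<subseteq> V \<Longrightarrow> restr (asg_of u V) W = asg_of u W"
  by (auto simp: restr_def)

lemma term_sat_asg_iff: "T \<in> asg V \<Longrightarrow> term_sat \<alpha> T \<longleftrightarrow> T = asg_of \<alpha> V"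
  by (erule asgE) (auto simp: term_sat_asg_of)

lemma term_sat_asg_agree:
  "T \<in> asg V \<Longrightarrow> term_sat \<alpha> T \<Longrightarrow> term_sat \<beta> T \<Longrightarrow> v \<in> V \<Longrightarrow> \<alpha> v = \<beta> v"
  by (erule asgE) (simp add: term_sat_asg_of)

lemma finite_asg: "finite V \<Longrightarrow> finite (asg V)"
  by (rule finite_subset[of _ "Pow (V \<times> UNIV)"]) (auto simp: asg_def)

lemma finite_asg_member: "finite V \<Longrightarrow> T \<in> asg V \<Longrightarrow> finite T"
  by (erule asgE) simp

lemma cnf_sat_if_term_sat_asg_of:
  assumes "cnf_sat \<beta> F" and "\<forall>C\<in>F. fst ` C \<subseteq> V" and "term_sat \<mu> (asg_of \<beta> V)"
  shows "cnf_sat \<mu> F"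
proof -
  have "cnf_sat \<mu> F \<longleftrightarrow> cnf_sat \<beta> F"
    using assms(2,3) by (intro cnf_sat_cong) (auto simp: term_sat_asg_of)
  with assms(1) show ?thesis by simp
qed

fun conj_lits :: "'a lit list \<Rightarrow> 'a form" where
  "conj_lits [] = FTrue"
| "conj_lits (l # ls) = FAnd (if snd l then FVar (fst l) else FNot (FVar (fst l))) (conj_lits ls)"

lemma feval_conj_lits: "feval \<alpha> (conj_lits ls) \<longleftrightarrow> term_sat \<alpha> (set ls)"
  by (induction ls) (auto simp: term_sat_def lit_sat_def)

lemma fvars_conj_lits: "fvars (conj_lits ls) = fst ` set ls"
  by (induction ls) auto

fun disj_forms :: "'a form list \<Rightarrow> 'a form" where
  "disj_forms [] = FFalse"
| "disj_forms (f # fs) = FOr f (disj_forms fs)"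

lemma feval_disj_forms: "feval \<alpha> (disj_forms fs) \<longleftrightarrow> (\<exists>f\<in>set fs. feval \<alpha> f)"
  by (induction fs) auto

lemma fvars_disj_forms: "fvars (disj_forms fs) = \<Union>(fvars ` set fs)"
  by (induction fs) auto

lemma has_definition_if_determined:
  assumes "finite X"
    and determined: "\<And>\<xi>. \<xi> \<in> asg X \<Longrightarrow>
      \<not> satisfiable (\<chi> \<union> units \<xi> \<union> {{(x, True)}}) \<or> \<not> satisfiable (\<chi> \<union> units \<xi> \<union> {{(x, False)}})"
  shows "has_definition \<chi> X x"
proof -
  define S where "S = {\<xi> \<in> asg X. satisfiable (\<chi> \<union> units \<xi> \<union> {{(x, True)}})}"
  have "finite S"
    using finite_asg[OF \<open>finite X\<close>] by (simp add: S_def)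
  then obtain L where L: "set L = S"
    using finite_list by blast
  have "\<exists>ls. set ls = \<xi>" if "\<xi> \<in> S" for \<xi>
    using that finite_asg_member[OF \<open>finite X\<close>] finite_list by (auto simp: S_def)
  then obtain lits where lits: "\<And>\<xi>. \<xi> \<in> S \<Longrightarrow> set (lits \<xi>) = \<xi>"
    by metis
  define \<psi> where "\<psi> = disj_forms (map (conj_lits \<circ> lits) L)"
  have feval_\<psi>: "feval \<alpha> \<psi> \<longleftrightarrow> (\<exists>\<xi>\<in>S. term_sat \<alpha> \<xi>)" for \<alpha>
    using lits by (auto simp: \<psi>_def feval_disj_forms feval_conj_lits L)
  have "fvars \<psi> \<subseteq> X"
    using lits by (auto simp: \<psi>_def fvars_disj_forms fvars_conj_lits L S_def asg_def)
  moreover have "\<alpha> x = feval \<alpha> \<psi>" if sat: "cnf_sat \<alpha> \<chi>" for \<alpha>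
  proof -
    have \<xi>: "asg_of \<alpha> X \<in> asg X" and "term_sat \<alpha> (asg_of \<alpha> X)"
      by (simp_all add: asg_of_in_asg term_sat_asg_of)
    then have sat_with: "satisfiable (\<chi> \<union> units (asg_of \<alpha> X) \<union> {{(x, \<alpha> x)}})"
      using sat by (auto simp: satisfiable_def lit_sat_def)
    have "feval \<alpha> \<psi> \<longleftrightarrow> asg_of \<alpha> X \<in> S"
      by (auto simp: feval_\<psi> S_def term_sat_asg_iff)
    also have "\<dots> \<longleftrightarrow> \<alpha> x"
      using determined[OF \<xi>] sat_with by (cases "\<alpha> x") (auto simp: S_def \<xi>)
    finally show ?thesis by simp
  qed
  ultimately show ?thesis
    unfolding has_definition_def is_definition_def by blast
qed

definition lift_trm :: "'v trm \<Rightarrow> 'v avar trm" where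
  "lift_trm s = {(Orig v, b) | v b. (v, b) \<in> s}"

fun arbiter_clauses :: "'v avar \<Rightarrow> 'v avar cnf" where
  "arbiter_clauses (Orig x) = {}"
| "arbiter_clauses (Arb e s) =
     {insert (Arb e s, True) (insert (Orig e, False) (neg_trm (lift_trm s))),
      insert (Arb e s, False) (insert (Orig e, True) (neg_trm (lift_trm s)))}"

fun arbiter_val :: "('v \<Rightarrow> 'v trm \<Rightarrow> bool) \<Rightarrow> 'v avar \<Rightarrow> bool" where
  "arbiter_val f (Orig x) = False"
| "arbiter_val f (Arb e s) = f e s"

lemma term_sat_lift_trm: "term_sat \<alpha> (lift_trm s) \<longleftrightarrow> term_sat (\<lambda>x. \<alpha> (Orig x)) s"
  by (force simp: lift_trm_def term_sat_def lit_sat_def)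

lemma restr_Orig_image:
  "restr \<xi> (Orig ` V) = lift_trm {(v, b). (Orig v, b) \<in> \<xi> \<and> v \<in> V}"
  unfolding restr_def lift_trm_def by force

lemma Orig_projection_in_asg:
  assumes "\<xi> \<in> asg (Orig ` V \<union> A)"
  shows "{(v, b). (Orig v, b) \<in> \<xi> \<and> v \<in> V} \<in> asg V"
proof -
  obtain g where "\<xi> = asg_of g (Orig ` V \<union> A)"
    using assms by (rule asgE)
  then have "{(v, b). (Orig v, b) \<in> \<xi> \<and> v \<in> V} = asg_of (g \<circ> Orig) V"
    by auto
  then show ?thesis
    by (simp add: asg_of_in_asg)
qed

lemma arbiter_clauses_imp_eq:
  assumes "cnf_sat \<alpha> (arbiter_clauses (Arb e s))" and "term_sat \<alpha> (lift_trm s)"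
  shows "\<alpha> (Arb e s) = \<alpha> (Orig e)"
  using assms by (auto simp: lit_sat_def)

lemma arbiter_determines_existential:
  assumes "arbiter_clauses (Arb e s) \<subseteq> F" and "Arb e s \<in> V" and "\<xi> \<in> asg V" and "lift_trm s \<subseteq> \<xi>"
    and "cnf_sat \<alpha> (F \<union> units \<xi>)" and "cnf_sat \<beta> (F \<union> units \<xi>)"
  shows "\<alpha> (Orig e) = \<beta> (Orig e)"
proof -
  have forced: "\<gamma> (Arb e s) = \<gamma> (Orig e)" if "cnf_sat \<gamma> (F \<union> units \<xi>)" for \<gamma>
  proof (rule arbiter_clauses_imp_eq)
    have "cnf_sat \<gamma> F"
      using that by simp
    then show "cnf_sat \<gamma> (arbiter_clauses (Arb e s))"
      using assms(1) by (rule cnf_sat_subset)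
    show "term_sat \<gamma> (lift_trm s)"
      using that assms(4) by (auto simp: term_sat_def)
  qed
  have "\<alpha> (Arb e s) = \<beta> (Arb e s)"
    using assms(2,3,5,6) by (intro term_sat_asg_agree[of \<xi> V]) simp_all
  then show ?thesis
    using forced[OF assms(5)] forced[OF assms(6)] by simp
qed

lemma vars_neg_trm_restr: "fst ` neg_trm (restr \<rho> A) \<subseteq> A"
  unfolding neg_trm_def restr_def by force

locale wf_dqbf =
  fixes us es :: "'v list" and D :: "'v \<Rightarrow> 'v set" and \<phi> :: "'v cnf"
  assumes wf: "dqbf_wf us es D \<phi>"
begin

lemma existential_not_universal: "e \<in> set es \<Longrightarrow> e \<notin> set us"
  using wf by (auto simp: dqbf_wf_def)

lemma dependencies_universal: "e \<in> set es \<Longrightarrow> D e \<subseteq> set us"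
  using wf by (simp add: dqbf_wf_def)

lemma finite_dependencies: "e \<in> set es \<Longrightarrow> finite (D e)"
  using dependencies_universal finite_subset by blast

lemma distinct_existentials: "distinct es"
  using wf by (simp add: dqbf_wf_def)

lemma vars_matrix: "C \<in> \<phi> \<Longrightarrow> l \<in> C \<Longrightarrow> fst l \<in> set us \<union> set es"
  using wf unfolding dqbf_wf_def by blast

definition is_model :: "('v \<Rightarrow> 'v trm \<Rightarrow> bool) \<Rightarrow> bool" where
  "is_model f \<longleftrightarrow> (\<forall>\<sigma>\<in>asg (set us).
     cnf_sat (\<lambda>x. if x \<in> set us then (x, True) \<in> \<sigma> else f x (restr \<sigma> (D x))) \<phi>)"

lemma dqbf_true_iff_model: "dqbf_true us es D \<phi> \<longleftrightarrow> (\<exists>f. is_model f)"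
  by (simp add: dqbf_true_def is_model_def)

definition arbiters :: "'v avar set" where
  "arbiters = {Arb e s | e s. e \<in> set es \<and> s \<in> asg (D e)}"

lemma finite_arbiters: "finite arbiters"
proof -
  have "arbiters = (\<Union>e\<in>set es. Arb e ` asg (D e))"
    by (auto simp: arbiters_def)
  then show ?thesis
    by (auto intro: finite_asg finite_dependencies)
qed

definition arbiter_inv :: "'v avar set \<Rightarrow> 'v avar cnf \<Rightarrow> bool" where
  "arbiter_inv A \<phi>A \<longleftrightarrow> A \<subseteq> arbiters \<and> \<phi>A = \<Union>(arbiter_clauses ` A)"

definition defs_inv :: "'v avar set \<Rightarrow> 'v avar cnf \<Rightarrow> ('v \<times> 'v avar form) list \<Rightarrow> bool" where
  "defs_inv A \<phi>A ds \<longleftrightarrow>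
     (\<forall>(e, \<psi>)\<in>set ds. is_definition (lift_cnf \<phi> \<union> \<phi>A) (Orig ` D e \<union> A) (Orig e) \<psi>)"

fun state_inv :: "'v state \<Rightarrow> bool" where
  "state_inv (Phase1 i A \<phi>A ds) \<longleftrightarrow>
     i \<le> length es \<and> arbiter_inv A \<phi>A \<and> defs_inv A \<phi>A ds \<and> map fst ds = take i es"
| "state_inv (Phase2 A \<phi>A ds CC \<tau>) \<longleftrightarrow>
     arbiter_inv A \<phi>A \<and> defs_inv A \<phi>A ds \<and> map fst ds = es \<and> \<tau> \<in> asg A \<and>
     (\<forall>C\<in>CC. fst ` C \<subseteq> A) \<and> (\<forall>\<mu>. term_sat \<mu> \<tau> \<longrightarrow> cnf_sat \<mu> CC) \<and>
     (\<forall>f. is_model f \<longrightarrow> cnf_sat (arbiter_val f) CC)"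
| "state_inv (Result b) \<longleftrightarrow> b = dqbf_true us es D \<phi>"

lemma finite_arbiter_set: "arbiter_inv A \<phi>A \<Longrightarrow> finite A"
  unfolding arbiter_inv_def using finite_arbiters finite_subset by blast

lemma arbiter_set_memE:
  assumes "arbiter_inv A \<phi>A" and "a \<in> A"
  obtains e s where "a = Arb e s" and "e \<in> set es" and "s \<in> asg (D e)"
  using assms by (auto simp: arbiter_inv_def arbiters_def)

lemma Orig_notin_arbiter_set: "arbiter_inv A \<phi>A \<Longrightarrow> Orig x \<notin> A"
  by (auto elim: arbiter_set_memE)

definition induced_valuation ::
    "('v \<Rightarrow> 'v trm \<Rightarrow> bool) \<Rightarrow> ('v \<Rightarrow> bool) \<Rightarrow> ('v avar \<Rightarrow> bool) \<Rightarrow> 'v avar \<Rightarrow> bool" where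
  "induced_valuation f u a v = (case v of
     Orig x \<Rightarrow> if x \<in> set us then u x else f x (restr (asg_of u (set us)) (D x))
   | Arb _ _ \<Rightarrow> a v)"

lemma induced_valuation_simps [simp]:
  "x \<in> set us \<Longrightarrow> induced_valuation f u a (Orig x) = u x"
  "x \<notin> set us \<Longrightarrow> induced_valuation f u a (Orig x) = f x (restr (asg_of u (set us)) (D x))"
  "induced_valuation f u a (Arb e s) = a (Arb e s)"
  by (simp_all add: induced_valuation_def)

lemma is_model_iff_induced_valuation:
  "is_model f \<longleftrightarrow> (\<forall>u. cnf_sat (induced_valuation f u a) (lift_cnf \<phi>))"
proof -
  have "(\<lambda>x. if x \<in> set us then (x, True) \<in> asg_of u (set us) else f x (restr (asg_of u (set us)) (D x))) =
        (\<lambda>x. induced_valuation f u a (Orig x))" for u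
    by (rule ext) simp
  then show ?thesis
    unfolding is_model_def ball_asg_iff cnf_sat_lift_cnf by simp
qed

lemma model_valuation_sat:
  assumes "is_model f" and "arbiter_inv A \<phi>A"
  shows "cnf_sat (induced_valuation f u (arbiter_val f)) (lift_cnf \<phi> \<union> \<phi>A)"
proof -
  let ?\<mu> = "induced_valuation f u (arbiter_val f)"
  have "cnf_sat ?\<mu> (arbiter_clauses a)" if "a \<in> A" for a
  proof -
    obtain e s where a: "a = Arb e s" and e: "e \<in> set es" and "s \<in> asg (D e)"
      using assms(2) \<open>a \<in> A\<close> by (rule arbiter_set_memE)
    obtain g where g: "s = asg_of g (D e)"
      using \<open>s \<in> asg (D e)\<close> by (rule asgE)
    have "?\<mu> (Orig e) = ?\<mu> (Arb e s)" if "term_sat ?\<mu> (lift_trm s)"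
    proof -
      have agree: "u v = g v" if "v \<in> D e" for v
      proof -
        have "?\<mu> (Orig v) = g v"
          using \<open>term_sat ?\<mu> (lift_trm s)\<close> that by (simp add: g term_sat_lift_trm term_sat_asg_of)
        moreover have "v \<in> set us"
          using that dependencies_universal[OF e] by blast
        ultimately show ?thesis
          by simp
      qed
      have "restr (asg_of u (set us)) (D e) = asg_of u (D e)"
        using dependencies_universal[OF e] by (rule restr_asg_of)
      also have "\<dots> = s"
        unfolding g using agree by (rule asg_of_cong)
      finally show ?thesis
        using existential_not_universal[OF e] by simp
    qed
    then show ?thesis
      by (auto simp: a lit_sat_def)
  qed
  with assms show ?thesis
    by (simp add: arbiter_inv_def is_model_iff_induced_valuation[where a = "arbiter_val f"])
qed

lemma model_satisfies_blocking_clause: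
  assumes "is_model f" and "arbiter_inv A \<phi>A" and "\<tau> \<in> asg A"
    and \<rho>: "\<rho> \<subseteq> \<tau> \<union> {(Orig u, \<alpha> (Orig u)) | u. u \<in> set us}"
    and core: "\<not> satisfiable (lift_cnf \<phi> \<union> \<phi>A \<union> units \<rho>)"
  shows "clause_sat (arbiter_val f) (neg_trm (restr \<rho> A))"
proof (rule ccontr)
  let ?\<mu> = "induced_valuation f (\<lambda>u. \<alpha> (Orig u)) (arbiter_val f)"
  assume "\<not> ?thesis"
  then have arb: "term_sat (arbiter_val f) (restr \<rho> A)"
    by simp
  have "lit_sat ?\<mu> l" if "l \<in> \<rho>" for l
  proof (cases "l \<in> \<tau>")
    case True
    then have "fst l \<in> A"
      using assms(3) by (auto simp: asg_def)
    then obtain e s where "fst l = Arb e s"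
      using assms(2) by (metis arbiter_set_memE)
    moreover have "l \<in> restr \<rho> A"
      using \<open>l \<in> \<rho>\<close> \<open>fst l \<in> A\<close> by (simp add: restr_def)
    then have "lit_sat (arbiter_val f) l"
      using arb unfolding term_sat_def by blast
    ultimately show ?thesis
      by (simp add: lit_sat_def)
  next
    case False
    then show ?thesis
      using that \<rho> by (auto simp: lit_sat_def)
  qed
  then have "term_sat ?\<mu> \<rho>"
    by (simp add: term_sat_def)
  then have "satisfiable (lift_cnf \<phi> \<union> \<phi>A \<union> units \<rho>)"
    unfolding satisfiable_def using model_valuation_sat[OF assms(1,2)] by auto
  with core show False ..
qed

lemma counterexample_core_unsat:
  assumes "defs_inv A \<phi>A ds" and "map fst ds = es" and "\<tau> \<in> asg A"
    and "\<not> cnf_sat \<alpha> (lift_cnf \<phi>)" and "defs_sat \<alpha> ds" and "term_sat \<alpha> \<tau>"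
  shows "\<not> satisfiable (lift_cnf \<phi> \<union> \<phi>A \<union> units (\<tau> \<union> {(Orig u, \<alpha> (Orig u)) | u. u \<in> set us}))"
proof
  assume "satisfiable (lift_cnf \<phi> \<union> \<phi>A \<union> units (\<tau> \<union> {(Orig u, \<alpha> (Orig u)) | u. u \<in> set us}))"
  then obtain \<mu> where \<mu>: "cnf_sat \<mu> (lift_cnf \<phi> \<union> \<phi>A)"
    and \<mu>_core: "term_sat \<mu> (\<tau> \<union> {(Orig u, \<alpha> (Orig u)) | u. u \<in> set us})"
    by (auto simp: satisfiable_def)
  then have "term_sat \<mu> \<tau>"
    by (simp add: term_sat_def)
  have agree_U: "\<mu> (Orig u) = \<alpha> (Orig u)" if "u \<in> set us" for u
  proof -
    have "(Orig u, \<alpha> (Orig u)) \<in> \<tau> \<union> {(Orig u, \<alpha> (Orig u)) | u. u \<in> set us}"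
      using that by blast
    then have "lit_sat \<mu> (Orig u, \<alpha> (Orig u))"
      using \<mu>_core unfolding term_sat_def by blast
    then show ?thesis
      by (simp add: lit_sat_def)
  qed
  have agree_A: "\<mu> a = \<alpha> a" if "a \<in> A" for a
    using assms(3) \<open>term_sat \<mu> \<tau>\<close> assms(6) that by (rule term_sat_asg_agree)
  have agree_E: "\<mu> (Orig e) = \<alpha> (Orig e)" if "e \<in> set es" for e
  proof -
    have "e \<in> fst ` set ds"
      using that assms(2) by (metis list.set_map)
    then obtain \<psi> where \<psi>: "(e, \<psi>) \<in> set ds"
      by auto
    then have def: "is_definition (lift_cnf \<phi> \<union> \<phi>A) (Orig ` D e \<union> A) (Orig e) \<psi>"
      using assms(1) by (auto simp: defs_inv_def)
    then have "\<mu> (Orig e) = feval \<mu> \<psi>"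
      using \<mu> by (simp add: is_definition_def)
    also have "\<dots> = feval \<alpha> \<psi>"
    proof (rule feval_cong)
      fix x assume "x \<in> fvars \<psi>"
      then have "x \<in> Orig ` D e \<union> A"
        using def by (auto simp: is_definition_def)
      then show "\<mu> x = \<alpha> x"
        using agree_U agree_A dependencies_universal[OF that] by blast
    qed
    also have "\<dots> = \<alpha> (Orig e)"
      using assms(5) \<psi> by (auto simp: defs_sat_def)
    finally show ?thesis .
  qed
  have "cnf_sat (\<lambda>x. \<mu> (Orig x)) \<phi> \<longleftrightarrow> cnf_sat (\<lambda>x. \<alpha> (Orig x)) \<phi>"
    using vars_matrix agree_U agree_E by (intro cnf_sat_cong) blast
  with \<mu> assms(4) show False
    by (simp add: cnf_sat_lift_cnf)
qed

definition skolem_of :: "('v \<times> 'v avar form) list \<Rightarrow> ('v avar \<Rightarrow> bool) \<Rightarrow> 'v \<Rightarrow> 'v trm \<Rightarrow> bool" where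
  "skolem_of ds t e s = (case map_of ds e of
     Some \<psi> \<Rightarrow> feval (\<lambda>v. case v of Orig x \<Rightarrow> (x, True) \<in> s | Arb _ _ \<Rightarrow> t v) \<psi>
   | None \<Rightarrow> False)"

lemma skolem_valuation_defs_sat:
  assumes "arbiter_inv A \<phi>A" and "defs_inv A \<phi>A ds" and "map fst ds = es"
  shows "defs_sat (induced_valuation (skolem_of ds t) u t) ds"
  unfolding defs_sat_def
proof (intro ballI, clarify)
  let ?\<alpha> = "induced_valuation (skolem_of ds t) u t"
  fix e \<psi> assume \<psi>: "(e, \<psi>) \<in> set ds"
  then have e: "e \<in> set es"
    using assms(3) by force
  have def: "is_definition (lift_cnf \<phi> \<union> \<phi>A) (Orig ` D e \<union> A) (Orig e) \<psi>"
    using assms(2) \<psi> by (auto simp: defs_inv_def)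
  have "map_of ds e = Some \<psi>"
    using \<psi> assms(3) distinct_existentials by (simp add: map_of_is_SomeI)
  then have "?\<alpha> (Orig e) =
      feval (\<lambda>v. case v of Orig x \<Rightarrow> (x, True) \<in> restr (asg_of u (set us)) (D e) | Arb _ _ \<Rightarrow> t v) \<psi>"
    using existential_not_universal[OF e] by (simp add: skolem_of_def)
  also have "\<dots> = feval ?\<alpha> \<psi>"
  proof (rule feval_cong)
    fix x assume "x \<in> fvars \<psi>"
    then have "x \<in> Orig ` D e \<union> A"
      using def by (auto simp: is_definition_def)
    then show "(case x of Orig x \<Rightarrow> (x, True) \<in> restr (asg_of u (set us)) (D e) | Arb _ _ \<Rightarrow> t x) = ?\<alpha> x"
    proof
      assume "x \<in> Orig ` D e"
      then show ?thesis
        using dependencies_universal[OF e] by (auto simp: restr_def)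
    next
      assume "x \<in> A"
      obtain e' s' where "x = Arb e' s'"
        using assms(1) \<open>x \<in> A\<close> by (rule arbiter_set_memE)
      then show ?thesis
        by simp
    qed
  qed
  finally show "?\<alpha> (Orig e) = feval ?\<alpha> \<psi>" .
qed

lemma dqbf_true_if_no_counterexample:
  assumes "arbiter_inv A \<phi>A" and "defs_inv A \<phi>A ds" and "map fst ds = es" and "\<tau> \<in> asg A"
    and no_cex: "\<not> (\<exists>\<alpha>. \<not> cnf_sat \<alpha> (lift_cnf \<phi>) \<and> defs_sat \<alpha> ds \<and> term_sat \<alpha> \<tau>)"
  shows "dqbf_true us es D \<phi>"
proof -
  obtain t where \<tau>: "\<tau> = asg_of t A"
    using assms(4) by (rule asgE)
  have "cnf_sat (induced_valuation (skolem_of ds t) u t) (lift_cnf \<phi>)" for u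
  proof -
    have "induced_valuation (skolem_of ds t) u t a = t a" if "a \<in> A" for a
      using assms(1) that by (rule arbiter_set_memE) simp
    then have "term_sat (induced_valuation (skolem_of ds t) u t) \<tau>"
      by (simp add: \<tau> term_sat_asg_of)
    then show ?thesis
      using no_cex skolem_valuation_defs_sat[OF assms(1-3)] by blast
  qed
  then show ?thesis
    using dqbf_true_iff_model is_model_iff_induced_valuation by blast
qed

lemma state_inv_init: "state_inv init_state"
  by (simp add: init_state_def arbiter_inv_def defs_inv_def)

lemma defs_inv_mono: "defs_inv A \<phi>A ds \<Longrightarrow> A \<subseteq> A' \<Longrightarrow> \<phi>A \<subseteq> \<phi>A' \<Longrightarrow> defs_inv A' \<phi>A' ds"
  unfolding defs_inv_def by (fast elim: is_definition_mono)

lemma added_arbiter_fresh: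
  assumes "arbiter_inv A \<phi>A" and e: "e \<in> set es" and \<xi>: "\<xi> \<in> asg (Orig ` D e \<union> A)"
    and sat_True: "satisfiable (lift_cnf \<phi> \<union> \<phi>A \<union> units \<xi> \<union> {{(Orig e, True)}})"
    and sat_False: "satisfiable (lift_cnf \<phi> \<union> \<phi>A \<union> units \<xi> \<union> {{(Orig e, False)}})"
    and \<sigma>: "\<sigma> = {(v, b). (Orig v, b) \<in> \<xi> \<and> v \<in> D e}"
  shows "Arb e \<sigma> \<in> arbiters - A"
proof
  show "Arb e \<sigma> \<in> arbiters"
    using e Orig_projection_in_asg[OF \<xi>] by (auto simp: arbiters_def \<sigma>)
  show "Arb e \<sigma> \<notin> A"
  proof
    assume "Arb e \<sigma> \<in> A"
    then have "arbiter_clauses (Arb e \<sigma>) \<subseteq> lift_cnf \<phi> \<union> \<phi>A"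
      using assms(1) unfolding arbiter_inv_def by blast
    moreover have "lift_trm \<sigma> \<subseteq> \<xi>"
      using restr_Orig_image[of \<xi> "D e"] by (auto simp: \<sigma> restr_def)
    moreover obtain \<alpha> \<beta> where "cnf_sat \<alpha> (lift_cnf \<phi> \<union> \<phi>A \<union> units \<xi>)" "\<alpha> (Orig e)"
      and "cnf_sat \<beta> (lift_cnf \<phi> \<union> \<phi>A \<union> units \<xi>)" "\<not> \<beta> (Orig e)"
      using sat_True sat_False by (auto simp: satisfiable_def lit_sat_def)
    ultimately show False
      using arbiter_determines_existential[OF _ _ \<xi>] \<open>Arb e \<sigma> \<in> A\<close> by blast
  qed
qed

lemma blocking_clause_fresh:
  assumes "arbiter_inv A \<phi>A" and "\<tau> \<in> asg A" and "\<forall>\<mu>. term_sat \<mu> \<tau> \<longrightarrow> cnf_sat \<mu> CC"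
    and \<rho>: "\<rho> \<subseteq> \<tau> \<union> {(Orig u, \<alpha> (Orig u)) | u. u \<in> set us}"
  shows "neg_trm (restr \<rho> A) \<notin> CC"
proof
  assume "neg_trm (restr \<rho> A) \<in> CC"
  obtain t where \<tau>: "\<tau> = asg_of t A"
    using assms(2) by (rule asgE)
  then have "term_sat t \<tau>"
    by (simp add: term_sat_asg_of)
  moreover have "restr \<rho> A \<subseteq> \<tau>"
    using \<rho> Orig_notin_arbiter_set[OF assms(1)] by (auto simp: restr_def)
  ultimately have "\<not> clause_sat t (neg_trm (restr \<rho> A))"
    by (auto simp: term_sat_def)
  moreover have "cnf_sat t CC"
    using assms(3) \<open>term_sat t \<tau>\<close> by blast
  ultimately show False
    using \<open>neg_trm (restr \<rho> A) \<in> CC\<close> by (auto simp: cnf_sat_def)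
qed

lemma models_satisfy_learned_clauses:
  assumes "state_inv (Phase2 A \<phi>A ds CC \<tau>)"
    and "\<rho> \<subseteq> \<tau> \<union> {(Orig u, \<alpha> (Orig u)) | u. u \<in> set us}"
    and "\<not> satisfiable (lift_cnf \<phi> \<union> \<phi>A \<union> units \<rho>)"
    and "is_model f"
  shows "cnf_sat (arbiter_val f) (insert (neg_trm (restr \<rho> A)) CC)"
proof -
  from assms(1) have "arbiter_inv A \<phi>A" and "\<tau> \<in> asg A"
    and "cnf_sat (arbiter_val f) CC"
    using assms(4) by simp_all
  with assms(2-4) show ?thesis
    using model_satisfies_blocking_clause by simp
qed

lemma alg_step_preserves_inv:
  assumes "alg_step us es D \<phi> s s'" and "state_inv s"
  shows "state_inv s'"
  using assms
proof (induction rule: alg_step.induct)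
  case (add_arbiter i e \<phi>A A \<xi> \<sigma> \<sigma>' ds)
  have "e \<in> set es"
    using add_arbiter.hyps(1,2) by simp
  then have "Arb e \<sigma> \<in> arbiters"
    using added_arbiter_fresh[OF _ _ add_arbiter.hyps(4-7)] add_arbiter.prems by simp
  moreover have "\<sigma>' = lift_trm \<sigma>"
    using add_arbiter.hyps(7,8) restr_Orig_image by simp
  ultimately show ?case
    using add_arbiter by (auto simp: arbiter_inv_def elim: defs_inv_mono)
next
  case (choose_def i e \<phi>A A \<psi> ds)
  then show ?case
    by (auto simp: defs_inv_def take_Suc_conv_app_nth)
next
  case (start_phase2 i A \<phi>A ds)
  then show ?case
    using asg_of_in_asg[of "\<lambda>_. True" A] by simp
next
  case (ret_true ds \<tau> A \<phi>A CC)
  from ret_true.prems have "arbiter_inv A \<phi>A" and "defs_inv A \<phi>A ds" and "map fst ds = es"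
    and "\<tau> \<in> asg A"
    by simp_all
  then show ?case
    using ret_true.hyps by (simp add: dqbf_true_if_no_counterexample)
next
  case (ret_false \<alpha> ds \<tau> \<rho> \<phi>A A CC)
  have "\<not> is_model f" for f
    using models_satisfy_learned_clauses[OF ret_false.prems ret_false.hyps(4,5)] ret_false.hyps(6)
    by (auto simp: satisfiable_def)
  then show ?case
    by (simp add: dqbf_true_iff_model)
next
  case (refine \<alpha> ds \<tau> \<rho> \<phi>A \<tau>' A CC)
  then show ?case
    using models_satisfy_learned_clauses[OF refine.prems refine.hyps(4,5)] vars_neg_trm_restr[of \<rho> A]
    by simp
qed

lemma phase1_progress:
  assumes "state_inv (Phase1 i A \<phi>A ds)"
  shows "\<exists>s'. alg_step us es D \<phi> (Phase1 i A \<phi>A ds) s'"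
proof (cases "i = length es")
  case True
  then show ?thesis
    using start_phase2 by blast
next
  case False
  with assms have i: "i < length es" and "arbiter_inv A \<phi>A"
    by simp_all
  define e where "e = es ! i"
  then have e: "e \<in> set es"
    using i by simp
  show ?thesis
  proof (cases "has_definition (lift_cnf \<phi> \<union> \<phi>A) (Orig ` D e \<union> A) (Orig e)")
    case True
    then obtain \<psi> where "is_definition (lift_cnf \<phi> \<union> \<phi>A) (Orig ` D e \<union> A) (Orig e) \<psi>"
      by (auto simp: has_definition_def)
    then show ?thesis
      by (blast intro: choose_def[OF i e_def])
  next
    case False
    have "finite (Orig ` D e \<union> A)"
      using finite_dependencies[OF e] finite_arbiter_set[OF \<open>arbiter_inv A \<phi>A\<close>] by simp
    then obtain \<xi> where "\<xi> \<in> asg (Orig ` D e \<union> A)"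
      and "satisfiable (lift_cnf \<phi> \<union> \<phi>A \<union> units \<xi> \<union> {{(Orig e, True)}})"
      and "satisfiable (lift_cnf \<phi> \<union> \<phi>A \<union> units \<xi> \<union> {{(Orig e, False)}})"
      using False has_definition_if_determined[of _ "lift_cnf \<phi> \<union> \<phi>A" "Orig e"] by blast
    from add_arbiter[where D = D, OF i e_def False this refl refl]
    show ?thesis
      by blast
  qed
qed

lemma phase2_progress:
  assumes "state_inv (Phase2 A \<phi>A ds CC \<tau>)"
  shows "\<exists>s'. alg_step us es D \<phi> (Phase2 A \<phi>A ds CC \<tau>) s'"
proof (cases "\<exists>\<alpha>. \<not> cnf_sat \<alpha> (lift_cnf \<phi>) \<and> defs_sat \<alpha> ds \<and> term_sat \<alpha> \<tau>")
  case False
  then show ?thesis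
    by (blast intro: ret_true)
next
  case True
  then obtain \<alpha> where cex: "\<not> cnf_sat \<alpha> (lift_cnf \<phi>)" "defs_sat \<alpha> ds" "term_sat \<alpha> \<tau>"
    by blast
  define \<rho> where "\<rho> = \<tau> \<union> {(Orig u, \<alpha> (Orig u)) | u. u \<in> set us}"
  have "defs_inv A \<phi>A ds" and "map fst ds = es" and "\<tau> \<in> asg A"
    using assms by simp_all
  from counterexample_core_unsat[OF this cex]
  have core: "\<not> satisfiable (lift_cnf \<phi> \<union> \<phi>A \<union> units \<rho>)"
    unfolding \<rho>_def .
  show ?thesis
  proof (cases "satisfiable (insert (neg_trm (restr \<rho> A)) CC)")
    case False
    then show ?thesis
      using ret_false[OF cex _ core] \<rho>_def by blast
  next
    case True
    then obtain \<beta> where \<beta>: "cnf_sat \<beta> (insert (neg_trm (restr \<rho> A)) CC)"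
      by (auto simp: satisfiable_def)
    have "\<forall>C\<in>insert (neg_trm (restr \<rho> A)) CC. fst ` C \<subseteq> A"
      using assms vars_neg_trm_restr by simp
    then have "\<forall>\<mu>. term_sat \<mu> (asg_of \<beta> A) \<longrightarrow> cnf_sat \<mu> (insert (neg_trm (restr \<rho> A)) CC)"
      using \<beta> cnf_sat_if_term_sat_asg_of by blast
    then show ?thesis
      using refine[OF cex _ core asg_of_in_asg] \<rho>_def by blast
  qed
qed

lemma state_inv_progress:
  assumes "state_inv s"
  shows "(\<exists>b. s = Result b) \<or> (\<exists>s'. alg_step us es D \<phi> s s')"
proof (cases s)
  case Phase1
  then show ?thesis
    using assms phase1_progress by blast
next
  case Phase2
  then show ?thesis
    using assms phase2_progress by blast
qed simp

fun phase_rank :: "'v state \<Rightarrow> nat" where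
  "phase_rank (Phase1 _ _ _ _) = 2"
| "phase_rank (Phase2 _ _ _ _ _) = 1"
| "phase_rank (Result _) = 0"

fun phase_work :: "'v state \<Rightarrow> nat" where
  "phase_work (Phase1 i _ _ _) = length es - i"
| "phase_work (Phase2 A _ _ CC _) = card (Pow (A \<times> (UNIV :: bool set)) - CC)"
    \<comment> \<open>the clauses over A not yet learned\<close>
| "phase_work (Result _) = 0"

fun missing_arbiters :: "'v state \<Rightarrow> nat" where
  "missing_arbiters (Phase1 _ A _ _) = card (arbiters - A)"
| "missing_arbiters _ = 0"

lemma alg_step_decreases:
  assumes "alg_step us es D \<phi> s s'" and "state_inv s"
  shows "(s', s) \<in> measures [phase_rank, phase_work, missing_arbiters]"
  using assms
proof (induction rule: alg_step.induct)
  case (add_arbiter i e \<phi>A A \<xi> \<sigma> \<sigma>' ds)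
  have "e \<in> set es"
    using add_arbiter.hyps(1,2) by simp
  then have "Arb e \<sigma> \<in> arbiters - A"
    using added_arbiter_fresh[OF _ _ add_arbiter.hyps(4-7)] add_arbiter.prems by simp
  then have "card (arbiters - insert (Arb e \<sigma>) A) < card (arbiters - A)"
    by (intro psubset_card_mono) (auto simp: finite_arbiters)
  then show ?case
    by simp
next
  case (refine \<alpha> ds \<tau> \<rho> \<phi>A \<tau>' A CC)
  let ?C = "neg_trm (restr \<rho> A)"
  from refine.prems have "arbiter_inv A \<phi>A" and "\<tau> \<in> asg A"
    and "\<forall>\<mu>. term_sat \<mu> \<tau> \<longrightarrow> cnf_sat \<mu> CC"
    by simp_all
  then have "?C \<notin> CC"
    using refine.hyps(4) by (rule blocking_clause_fresh)
  moreover have "?C \<in> Pow (A \<times> UNIV)"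
    using vars_neg_trm_restr by force
  moreover have "finite (Pow (A \<times> (UNIV :: bool set)) - CC)"
    using finite_arbiter_set[OF \<open>arbiter_inv A \<phi>A\<close>] by simp
  ultimately have "card (Pow (A \<times> UNIV) - insert ?C CC) < card (Pow (A \<times> UNIV) - CC)"
    by (intro psubset_card_mono) auto
  then show ?case
    by simp
qed simp_all

lemma reachable_state_inv: "(alg_step us es D \<phi>)\<^sup>*\<^sup>* init_state s \<Longrightarrow> state_inv s"
  by (induction rule: rtranclp_induct) (auto intro: state_inv_init alg_step_preserves_inv)

lemma no_infinite_run: "\<nexists>f. f 0 = init_state \<and> (\<forall>n. alg_step us es D \<phi> (f n) (f (Suc n)))"
proof
  assume "\<exists>f. f 0 = init_state \<and> (\<forall>n. alg_step us es D \<phi> (f n) (f (Suc n)))"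
  then obtain f where "f 0 = init_state" and run: "\<And>n. alg_step us es D \<phi> (f n) (f (Suc n))"
    by blast
  then have "state_inv (f n)" for n
    by (induction n) (auto intro: state_inv_init alg_step_preserves_inv)
  then have "(f (Suc n), f n) \<in> measures [phase_rank, phase_work, missing_arbiters]" for n
    using run alg_step_decreases by blast
  then show False
    using wf_measures wf_iff_no_infinite_down_chain by blast
qed

end

theorem corollary1:
  fixes us es :: "'v list" and D :: "'v \<Rightarrow> 'v set" and \<phi> :: "'v cnf"
  assumes "dqbf_wf us es D \<phi>"
  shows "\<not> (\<exists>f. f 0 = init_state \<and> (\<forall>n. alg_step us es D \<phi> (f n) (f (Suc n)))) \<and>
         (\<forall>s. (alg_step us es D \<phi>)\<^sup>*\<^sup>* init_state s \<longrightarrow>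
             (\<exists>b. s = Result b) \<or> (\<exists>t. alg_step us es D \<phi> s t)) \<and>
         (\<forall>b. (alg_step us es D \<phi>)\<^sup>*\<^sup>* init_state (Result b) \<longrightarrow>
             b = dqbf_true us es D \<phi>)"
proof -
  interpret wf_dqbf us es D \<phi>
    using assms by unfold_locales
  show ?thesis
    using no_infinite_run reachable_state_inv state_inv_progress by fastforce
qed

end
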